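(* Fix a task $i$ and $L\ge L^{(i)}$. Suppose that at every checkpoint $\nu\in\mathcal S_u$ the interval satisfies $u^{(i)}(\overline y^{(i)}_\nu)\in[\underline u^{(i)}_\nu,\overline u^{(i)}_\nu]$, and that $f^{\star(i)}-\overline y^{(i)}_s\le\epsilon^{f,(i)}_s$ for all $s\ge1$. Then for all $s\ge1$, $$\underline U^{(i)}_s(L)\le U^{(i)}\le\overline U^{(i)}_s(L).$$
   Context: Task $i$ has objective $f^{(i)}$ with maximum $f^{\star(i)}$, incumbents $\overline y^{(i)}_s:=\max_{r\le s}f^{(i)}(x^{(i)}_r)$ (nondecreasing in $s$), utility $u^{(i)}:\mathbb R\to[0,1]$ monotone nondecreasing and $L^{(i)}$-Lipschitz, and $U^{(i)}:=u^{(i)}(f^{\star(i)})$. $\epsilon^{f,(i)}_s>0$ are given gap bounds. Utility is queried at local times in a set $\mathcal S_u\subseteq\mathbb N$, each query $\nu$ producing an interval $[\underline u^{(i)}_\nu,\overline u^{(i)}_\nu]$. Let $\nu=\nu^{(i)}_s:=\max\{r\le s:r\in\mathcal S_u\}$ (most recent checkpoint). Define $\overline u^{(i)}_s(L):=\min\{1,\overline u^{(i)}_\nu+L(\overline y^{(i)}_s-\overline y^{(i)}_\nu)\}$, $\underline u^{(i)}_s(L):=\underline u^{(i)}_\nu$ (and $\overline u^{(i)}_s(L)=1$, $\underline u^{(i)}_s(L)=0$ if no checkpoint has occurred yet), $\underline U^{(i)}_s(L):=\underline u^{(i)}_s(L)$, $\overline U^{(i)}_s(L):=\min\{1,\overline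 u^{(i)}_s(L)+L\epsilon^{f,(i)}_s\}$. *)

theory Defs
  imports "HOL-Analysis.Analysis"
begin

definition incumbent :: "('x \<Rightarrow> real) \<Rightarrow> (nat \<Rightarrow> 'x) \<Rightarrow> nat \<Rightarrow> real" where
  "incumbent f x s = Max ((\<lambda>r. f (x r)) ` {1..s})"

definition last_checkpoint :: "nat set \<Rightarrow> nat \<Rightarrow> nat" where
  "last_checkpoint Su s = Max {r \<in> Su. 1 \<le> r \<and> r \<le> s}"

definition has_checkpoint :: "nat set \<Rightarrow> nat \<Rightarrow> bool" where
  "has_checkpoint Su s \<longleftrightarrow> (\<exists>r \<in> Su. 1 \<le> r \<and> r \<le> s)"

definition u_upper :: "('x \<Rightarrow> real) \<Rightarrow> (nat \<Rightarrow> 'x) \<Rightarrow> nat set \<Rightarrow> (nat \<Rightarrow> real) \<Rightarrow> real \<Rightarrow> nat \<Rightarrow> real" where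
  "u_upper f x Su uhi L s =
     (if has_checkpoint Su s then
        (let \<nu> = last_checkpoint Su s in
          min 1 (uhi \<nu> + L * (incumbent f x s - incumbent f x \<nu>)))
      else 1)"

definition u_lower :: "nat set \<Rightarrow> (nat \<Rightarrow> real) \<Rightarrow> nat \<Rightarrow> real" where
  "u_lower Su ulo s = (if has_checkpoint Su s then ulo (last_checkpoint Su s) else 0)"

definition U_lower :: "nat set \<Rightarrow> (nat \<Rightarrow> real) \<Rightarrow> nat \<Rightarrow> real" where
  "U_lower Su ulo s = u_lower Su ulo s"

definition U_upper :: "('x \<Rightarrow> real) \<Rightarrow> (nat \<Rightarrow> 'x) \<Rightarrow> nat set \<Rightarrow> (nat \<Rightarrow> real) \<Rightarrow> (nat \<Rightarrow> real) \<Rightarrow> real \<Rightarrow> nat \<Rightarrow> real" where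
  "U_upper f x Su uhi eps L s = min 1 (u_upper f x Su uhi L s + L * eps s)"

end

theory Submission
  imports Defs
begin

text \<open>At the last checkpoint \<open>\<nu>\<close> the interval contains \<open>u(y\<^sub>\<nu>)\<close>. The lower end also bounds
  \<open>u(f\<^sup>\<star>)\<close>, because \<open>y\<^sub>\<nu> \<le> f\<^sup>\<star>\<close> and \<open>u\<close> is monotone. For the upper end, the Lipschitz
  bound carries it first from \<open>y\<^sub>\<nu>\<close> to the current incumbent \<open>y\<^sub>s\<close> and then, using the gap
  bound \<open>f\<^sup>\<star> - y\<^sub>s \<le> \<epsilon>\<^sub>s\<close>, on to \<open>f\<^sup>\<star>\<close>. Truncation at 1 is harmless since \<open>u \<le> 1\<close>.\<close>

lemma incumbent_le:
  assumes "\<And>z. f z \<le> c" and "1 \<le> s"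
  shows "incumbent f x s \<le> c"
  unfolding incumbent_def using assms by (subst Max_le_iff) auto

lemma incumbent_mono:
  assumes "1 \<le> a" and "a \<le> b"
  shows "incumbent f x a \<le> incumbent f x b"
  unfolding incumbent_def using assms by (intro Max_mono) auto

lemma last_checkpoint_mem:
  assumes "has_checkpoint Su s"
  shows "last_checkpoint Su s \<in> Su" and "1 \<le> last_checkpoint Su s" and "last_checkpoint Su s \<le> s"
proof -
  have "finite {r \<in> Su. 1 \<le> r \<and> r \<le> s}"
    by (rule finite_subset[of _ "{..s}"]) auto
  moreover have "{r \<in> Su. 1 \<le> r \<and> r \<le> s} \<noteq> {}"
    using assms unfolding has_checkpoint_def by auto
  ultimately have "last_checkpoint Su s \<in> {r \<in> Su. 1 \<le> r \<and> r \<le> s}"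
    unfolding last_checkpoint_def by (rule Max_in)
  then show "last_checkpoint Su s \<in> Su" and "1 \<le> last_checkpoint Su s"
    and "last_checkpoint Su s \<le> s" by auto
qed

lemma lipschitz_increment_le:
  fixes u :: "real \<Rightarrow> real"
  assumes "\<forall>a b. \<bar>u a - u b\<bar> \<le> Lu * \<bar>a - b\<bar>" and "Lu \<le> L" and "a \<le> b"
  shows "u b \<le> u a + L * (b - a)"
proof -
  have "u b - u a \<le> Lu * \<bar>b - a\<bar>"
    using assms(1) by (metis abs_le_D1)
  also have "\<dots> \<le> L * (b - a)"
    using assms(2,3) by (simp add: mult_right_mono)
  finally show ?thesis by simp
qed

lemma u_lower_le_utility_max:
  fixes u :: "real \<Rightarrow> real"
  assumes "\<forall>z. f z \<le> fstar" and "mono u" and "0 \<le> u fstar"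
    and "\<forall>\<nu>\<in>Su. 1 \<le> \<nu> \<longrightarrow> ulo \<nu> \<le> u (incumbent f x \<nu>)"
  shows "u_lower Su ulo s \<le> u fstar"
proof (cases "has_checkpoint Su s")
  case True
  define \<nu> where "\<nu> = last_checkpoint Su s"
  have "\<nu> \<in> Su" and "1 \<le> \<nu>"
    using last_checkpoint_mem[OF True] unfolding \<nu>_def by auto
  then have "ulo \<nu> \<le> u (incumbent f x \<nu>)"
    using assms(4) by blast
  also have "\<dots> \<le> u fstar"
    using \<open>1 \<le> \<nu>\<close> assms(1,2) by (simp add: incumbent_le monoD)
  finally show ?thesis
    using True unfolding u_lower_def \<nu>_def by simp
qed (use assms(3) in \<open>simp add: u_lower_def\<close>)

lemma utility_incumbent_le_u_upper:
  fixes u :: "real \<Rightarrow> real"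
  assumes "\<forall>a b. \<bar>u a - u b\<bar> \<le> Lu * \<bar>a - b\<bar>" and "Lu \<le> L" and "\<forall>t. u t \<le> 1"
    and "\<forall>\<nu>\<in>Su. 1 \<le> \<nu> \<longrightarrow> u (incumbent f x \<nu>) \<le> uhi \<nu>"
  shows "u (incumbent f x s) \<le> u_upper f x Su uhi L s"
proof (cases "has_checkpoint Su s")
  case True
  define \<nu> where "\<nu> = last_checkpoint Su s"
  have "\<nu> \<in> Su" and "1 \<le> \<nu>" and "\<nu> \<le> s"
    using last_checkpoint_mem[OF True] unfolding \<nu>_def by auto
  have "u (incumbent f x s) \<le> u (incumbent f x \<nu>) + L * (incumbent f x s - incumbent f x \<nu>)"
    using \<open>1 \<le> \<nu>\<close> \<open>\<nu> \<le> s\<close> assms(1,2) by (intro lipschitz_increment_le incumbent_mono)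
  also have "\<dots> \<le> uhi \<nu> + L * (incumbent f x s - incumbent f x \<nu>)"
    using \<open>\<nu> \<in> Su\<close> \<open>1 \<le> \<nu>\<close> assms(4) by simp
  finally show ?thesis
    using True assms(3) unfolding u_upper_def \<nu>_def Let_def by simp
qed (use assms(3) in \<open>simp add: u_upper_def\<close>)

theorem lemmaD3:
  fixes f :: "'x \<Rightarrow> real" and x :: "nat \<Rightarrow> 'x" and fstar :: real
    and u :: "real \<Rightarrow> real" and Lu L :: real
    and eps :: "nat \<Rightarrow> real" and Su :: "nat set" and ulo uhi :: "nat \<Rightarrow> real"
  assumes fmax: "\<forall>z. f z \<le> fstar" and fstar_att: "\<exists>z. f z = fstar"
    and u_range: "\<forall>t. 0 \<le> u t \<and> u t \<le> 1"
    and u_mono: "mono u"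
    and Lu_nonneg: "0 \<le> Lu"
    and u_lip: "\<forall>a b. \<bar>u a - u b\<bar> \<le> Lu * \<bar>a - b\<bar>"
    and eps_pos: "\<forall>s. 0 < eps s"
    and L_ge: "L \<ge> Lu"
    and valid: "\<forall>\<nu>\<in>Su. 1 \<le> \<nu> \<longrightarrow>
                   ulo \<nu> \<le> u (incumbent f x \<nu>) \<and> u (incumbent f x \<nu>) \<le> uhi \<nu>"
    and gap: "\<forall>s\<ge>1. fstar - incumbent f x s \<le> eps s"
    and s1: "s \<ge> 1"
  shows "U_lower Su ulo s \<le> u fstar \<and> u fstar \<le> U_upper f x Su uhi eps L s"
proof
  show "U_lower Su ulo s \<le> u fstar"
    unfolding U_lower_def using fmax u_mono u_range valid by (intro u_lower_le_utility_max) auto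
next
  have "incumbent f x s \<le> fstar"
    using fmax s1 by (simp add: incumbent_le)
  then have "u fstar \<le> u (incumbent f x s) + L * (fstar - incumbent f x s)"
    using u_lip L_ge by (rule lipschitz_increment_le[rotated 2])
  also have "\<dots> \<le> u (incumbent f x s) + L * eps s"
    using gap s1 L_ge Lu_nonneg by (simp add: mult_left_mono)
  also have "\<dots> \<le> u_upper f x Su uhi L s + L * eps s"
    using u_lip L_ge u_range valid by (simp add: utility_incumbent_le_u_upper)
  finally show "u fstar \<le> U_upper f x Su uhi eps L s"
    using u_range unfolding U_upper_def by simp
qed

end
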